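(* Let $r>\frac{2}{3}$, $D>0$, $\mu\in\mathbb{R}$ and $c<u_b(r)$ be fixed, where $u_b(r)$ is defined in the context. Consider the system $$\dot q=s,\qquad \dot s=\frac{1}{D}\big((u+\mu)s-f(q,u;r)\big),\qquad \dot u=\frac{\epsilon}{u-c}\,g(q,u)$$ with $f(q,u;r)=q\big(r+u-2-(r+0.1)(q-1)^2\big)$ and $g(q,u)=2-u+2q(1-u)$. Then the equilibria $X_1=(0,0,2)$ and $X_2=(q_{b,+}(r),0,u_b(r))$ of this system are hyperbolic for all $\epsilon>0$ sufficiently small.
   Context: This is the traveling-wave ODE (with $\dot{}=d/d\xi$, $\xi=x-ct$) of the Barkley pipe-flow model $q_t=Dq_{xx}+(\zeta-u)q_x+f(q,u;r)$, $u_t=-uu_x+\epsilon g(q,u)$, with $\mu=-(\zeta+c)$. For $r>\frac23$, $u_b(r)\in(\frac65,\frac43)$ denotes the unique value of $u$ in $(\frac65,\frac43)$ such that, with $q_{b,+}(r)=1+\sqrt{\frac{r+u_b(r)-2}{r+0.1}}>1$, one has $g(q_{b,+}(r),u_b(r))=0$; then $X_2=(q_{b,+}(r),0,u_b(r))$ is an equilibrium (the "turbulent" state) and $X_1=(0,0,2)$ is the "laminar" equilibrium. *)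

theory Defs
  imports "HOL-Analysis.Analysis"
begin

definition fB :: "real \<Rightarrow> real \<Rightarrow> real \<Rightarrow> real" where
  "fB q u r = q * (r + u - 2 - (r + 1/10) * (q - 1)^2)"

definition gB :: "real \<Rightarrow> real \<Rightarrow> real" where
  "gB q u = 2 - u + 2 * q * (1 - u)"

definition qbp_of :: "real \<Rightarrow> real \<Rightarrow> real" where
  "qbp_of r u = 1 + sqrt ((r + u - 2) / (r + 1/10))"

definition u_b :: "real \<Rightarrow> real" where
  "u_b r = (THE u. 6/5 < u \<and> u < 4/3 \<and> gB (qbp_of r u) u = 0)"

definition q_bp :: "real \<Rightarrow> real" where
  "q_bp r = qbp_of r (u_b r)"

definition tw_field :: "real \<Rightarrow> real \<Rightarrow> real \<Rightarrow> real \<Rightarrow> real \<Rightarrow> real^3 \<Rightarrow> real^3" where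
  "tw_field r D \<mu> c \<epsilon> X =
     vector [X$2,
             ((X$3 + \<mu>) * X$2 - fB (X$1) (X$3) r) / D,
             \<epsilon> / (X$3 - c) * gB (X$1) (X$3)]"

definition is_complex_eigenvalue :: "real^'n^'n \<Rightarrow> complex \<Rightarrow> bool" where
  "is_complex_eigenvalue A z \<longleftrightarrow>
     (\<exists>v :: complex^'n. v \<noteq> 0 \<and>
        (\<chi> i. \<Sum>j\<in>UNIV. complex_of_real (A $ i $ j) * v $ j) = z *s v)"

definition hyperbolic_equilibrium :: "(real^'n \<Rightarrow> real^'n) \<Rightarrow> real^'n \<Rightarrow> bool" where
  "hyperbolic_equilibrium F x \<longleftrightarrow>
     F x = 0 \<and>
     (\<exists>L. (F has_derivative L) (at x) \<and>
          (\<forall>z. Re z = 0 \<longrightarrow> \<not> is_complex_eigenvalue (matrix L) z))"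

end

(* At an equilibrium (q, 0, u) with g(q, u) = 0 the Jacobian has the shape
   [[0, 1, 0], [a, b, c], [d, 0, e]], whose characteristic polynomial is
   (z^2 - b z - a)(z - e) - c d.  At both equilibria a = -f_q / D > 0, c d >= 0 and
   e = -eps (1 + 2q) / (u - c) < 0.  Once eps is so small that b e < a, a root z = i y is
   impossible: the imaginary part y (b e - a - y^2) forces y = 0, and then the real part
   e a - c d is negative.  u_b(r) is well defined because u |-> g(q_{b,+}(u), u) changes
   sign on [6/5, 4/3] and is strictly decreasing there. *)
theory Submission
  imports Defs
begin

lemma has_derivative_vec_componentwise:
  fixes f :: "'a::real_normed_vector \<Rightarrow> real^'n"
  assumes "\<And>i. ((\<lambda>x. f x $ i) has_derivative (\<lambda>h. f' h $ i)) (at a within S)"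
  shows "(f has_derivative f') (at a within S)"
  using assms by (subst has_derivative_componentwise_within) (auto simp: Basis_vec_def cart_eq_inner_axis)

lemma eigenvalue_char_poly_root:
  fixes a b c d e :: real and z :: complex
  assumes "is_complex_eigenvalue
    (vector [vector [0, 1, 0], vector [a, b, c], vector [d, 0, e]] :: real^3^3) z"
  shows "(z\<^sup>2 - b * z - a) * (z - e) - c * d = 0"
proof -
  let ?p = "(z\<^sup>2 - b * z - a) * (z - e) - c * d"
  obtain v :: "complex^3" where "v \<noteq> 0" and v:
    "(\<chi> i. \<Sum>j\<in>UNIV. complex_of_real
        ((vector [vector [0, 1, 0], vector [a, b, c], vector [d, 0, e]] :: real^3^3) $ i $ j) * v $ j)
      = z *s v"
    using assms unfolding is_complex_eigenvalue_def by blast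
  have v2: "v$2 = z * v$1" and v3: "(z - e) * v$3 = d * v$1"
    and cv3: "c * v$3 = (z\<^sup>2 - b * z - a) * v$1"
    using v[THEN arg_cong, of "\<lambda>w. w$1"] v[THEN arg_cong, of "\<lambda>w. w$2"]
      v[THEN arg_cong, of "\<lambda>w. w$3"]
    by (auto simp: sum_3 algebra_simps power2_eq_square)
  have "?p * v$1 = (z - e) * ((z\<^sup>2 - b * z - a) * v$1) - c * (d * v$1)"
    by (simp add: algebra_simps)
  also have "\<dots> = (z - e) * (c * v$3) - c * ((z - e) * v$3)"
    by (simp only: v3 cv3)
  finally have p1: "?p * v$1 = 0"
    by (simp add: algebra_simps)
  have "?p * v$3 = (z\<^sup>2 - b * z - a) * ((z - e) * v$3) - d * (c * v$3)"
    by (simp add: algebra_simps)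
  also have "\<dots> = (z\<^sup>2 - b * z - a) * (d * v$1) - d * ((z\<^sup>2 - b * z - a) * v$1)"
    by (simp only: v3 cv3)
  finally have p3: "?p * v$3 = 0"
    by (simp add: algebra_simps)
  have p2: "?p * v$2 = 0"
    unfolding v2 using p1 by (metis mult.left_commute mult_zero_right)
  show ?thesis
  proof (rule ccontr)
    assume "?p \<noteq> 0"
    with p1 p2 p3 have "v = 0"
      by (simp add: vec_eq_iff forall_3)
    with \<open>v \<noteq> 0\<close> show False ..
  qed
qed

lemma char_poly_no_imaginary_root:
  fixes a b c d e :: real and z :: complex
  assumes "a > 0" "e < 0" "c * d \<ge> 0" "b * e < a" "Re z = 0"
  shows "(z\<^sup>2 - b * z - a) * (z - e) - c * d \<noteq> 0"
proof
  assume p: "(z\<^sup>2 - b * z - a) * (z - e) - c * d = 0"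
  define y where "y = Im z"
  have "z = \<i> * of_real y"
    using \<open>Re z = 0\<close> by (simp add: y_def complex_eq_iff)
  then have "(z\<^sup>2 - b * z - a) * (z - e) - c * d
      = of_real (e * (y\<^sup>2 + a) + b * y\<^sup>2 - c * d) + \<i> * of_real (y * (b * e - a - y\<^sup>2))"
    by (simp add: algebra_simps power2_eq_square)
  with p have re: "e * (y\<^sup>2 + a) + b * y\<^sup>2 - c * d = 0" and im: "y * (b * e - a - y\<^sup>2) = 0"
    by (simp_all add: complex_eq_iff)
  have "b * e - a - y\<^sup>2 < 0"
    using \<open>b * e < a\<close> zero_le_power2[of y] by linarith
  with im have "y = 0"
    by simp
  with re have "e * a = c * d"
    by simp
  moreover have "e * a < 0"
    using assms(1,2) by (simp add: mult_neg_pos)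
  ultimately show False
    using \<open>c * d \<ge> 0\<close> by simp
qed

lemma hyperbolic_equilibriumI:
  fixes F :: "real^'n \<Rightarrow> real^'n"
  assumes "F x = 0" and "(F has_derivative (\<lambda>h. A *v h)) (at x)"
    and "\<And>z. Re z = 0 \<Longrightarrow> \<not> is_complex_eigenvalue A z"
  shows "hyperbolic_equilibrium F x"
  using assms unfolding hyperbolic_equilibrium_def by auto

definition fB_dq :: "real \<Rightarrow> real \<Rightarrow> real \<Rightarrow> real" where
  "fB_dq q u r = r + u - 2 - (r + 1/10) * (q - 1)\<^sup>2 - 2 * (r + 1/10) * q * (q - 1)"

definition tw_jacobian :: "real \<Rightarrow> real \<Rightarrow> real \<Rightarrow> real \<Rightarrow> real \<Rightarrow> real \<Rightarrow> real \<Rightarrow> real^3^3" where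
  "tw_jacobian r D \<mu> c \<epsilon> q u =
     vector [vector [0, 1, 0],
             vector [- fB_dq q u r / D, (u + \<mu>) / D, - q / D],
             vector [\<epsilon> / (u - c) * (2 * (1 - u)), 0, - \<epsilon> / (u - c) * (1 + 2 * q)]]"

lemma has_derivative_tw_field:
  assumes "gB q u = 0" and "u \<noteq> c" and "D \<noteq> 0"
  shows "(tw_field r D \<mu> c \<epsilon> has_derivative (\<lambda>h. tw_jacobian r D \<mu> c \<epsilon> q u *v h))
           (at (vector [q, 0, u]))"
proof (rule has_derivative_vec_componentwise)
  note nth = bounded_linear.has_derivative[OF bounded_linear_vec_nth]
  let ?F = "tw_field r D \<mu> c \<epsilon>" and ?J = "tw_jacobian r D \<mu> c \<epsilon> q u"
  have 1: "((\<lambda>X. ?F X $ 1) has_derivative (\<lambda>h. (?J *v h) $ 1)) (at (vector [q, 0, u]))"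
    by (auto intro!: derivative_eq_intros nth simp: tw_field_def tw_jacobian_def matrix_vector_mult_def sum_3)
  have 2: "((\<lambda>X. ?F X $ 2) has_derivative (\<lambda>h. (?J *v h) $ 2)) (at (vector [q, 0, u]))"
    unfolding tw_field_def tw_jacobian_def fB_def fB_dq_def using assms(3)
    by (auto intro!: derivative_eq_intros nth
        simp: matrix_vector_mult_def sum_3 fun_eq_iff field_simps power2_eq_square)
  have k: "((\<lambda>X :: real^3. \<epsilon> / (X$3 - c)) has_derivative (\<lambda>h. - \<epsilon> * h$3 / (u - c)\<^sup>2))
      (at (vector [q, 0, u]))"
    using assms(2) by (auto intro!: derivative_eq_intros nth simp: power2_eq_square field_simps)
  have g: "((\<lambda>X :: real^3. gB (X$1) (X$3)) has_derivative (\<lambda>h. 2 * (1 - u) * h$1 - (1 + 2 * q) * h$3))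
      (at (vector [q, 0, u]))"
    unfolding gB_def by (auto intro!: derivative_eq_intros nth simp: algebra_simps)
  have 3: "((\<lambda>X. ?F X $ 3) has_derivative (\<lambda>h. (?J *v h) $ 3)) (at (vector [q, 0, u]))"
    using has_derivative_mult[OF k g] assms(1)
    by (simp add: tw_field_def tw_jacobian_def matrix_vector_mult_def sum_3 algebra_simps)
  fix i :: 3
  from exhaust_3[of i] 1 2 3
  show "((\<lambda>X. ?F X $ i) has_derivative (\<lambda>h. (?J *v h) $ i)) (at (vector [q, 0, u]))"
    by blast
qed

lemma eventually_hyperbolic_tw_equilibrium:
  assumes "fB q u r = 0" and "gB q u = 0" and "fB_dq q u r < 0"
    and "0 \<le> q" and "1 \<le> u" and "c < u" and "D > 0"
  shows "\<forall>\<^sub>F \<epsilon> in at_right 0. hyperbolic_equilibrium (tw_field r D \<mu> c \<epsilon>) (vector [q, 0, u])"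
proof -
  have "((\<lambda>\<epsilon>. (u + \<mu>) / D * (- \<epsilon> / (u - c) * (1 + 2 * q))) \<longlongrightarrow> 0) (at_right 0)"
    using assms(6,7) by (auto intro!: tendsto_eq_intros)
  moreover have a: "0 < - fB_dq q u r / D"
    using assms(3,7) by (simp add: divide_neg_pos)
  ultimately have "\<forall>\<^sub>F \<epsilon> in at_right 0.
      (u + \<mu>) / D * (- \<epsilon> / (u - c) * (1 + 2 * q)) < - fB_dq q u r / D"
    by (rule order_tendstoD)
  then show ?thesis
    using eventually_at_right_less[of 0]
  proof eventually_elim
    case (elim \<epsilon>)
    show ?case
    proof (rule hyperbolic_equilibriumI)
      show "tw_field r D \<mu> c \<epsilon> (vector [q, 0, u]) = 0"
        using assms(1,2) by (simp add: tw_field_def vec_eq_iff forall_3)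
      show "(tw_field r D \<mu> c \<epsilon> has_derivative (\<lambda>h. tw_jacobian r D \<mu> c \<epsilon> q u *v h))
          (at (vector [q, 0, u]))"
        using assms(2,6,7) by (intro has_derivative_tw_field) auto
      fix z :: complex
      assume "Re z = 0"
      have e: "- \<epsilon> / (u - c) * (1 + 2 * q) < 0"
        using elim(2) assms(4,6) by (simp add: divide_neg_pos mult_neg_pos add_pos_nonneg)
      have cd: "(- q / D) * (\<epsilon> / (u - c) * (2 * (1 - u))) \<ge> 0"
        using elim(2) assms(4-7) by (intro mult_nonpos_nonpos mult_nonneg_nonpos) auto
      show "\<not> is_complex_eigenvalue (tw_jacobian r D \<mu> c \<epsilon> q u) z"
      proof
        assume "is_complex_eigenvalue (tw_jacobian r D \<mu> c \<epsilon> q u) z"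
        from eigenvalue_char_poly_root[OF this[unfolded tw_jacobian_def]]
          char_poly_no_imaginary_root[OF a e cd elim(1) \<open>Re z = 0\<close>]
        show False
          by contradiction
      qed
    qed
  qed
qed

(* Isabelle's sqrt is odd (sqrt (-x) = - sqrt x), so qbp_of r u drops below 1 when
   r + u < 2; positivity is all the uniqueness argument needs. *)
lemma qbp_of_pos:
  assumes "r > - 1/10" and "2 * r + u > 19/10"
  shows "0 < qbp_of r u"
proof -
  have "-1 < (r + u - 2) / (r + 1/10)"
    using assms by (simp add: less_divide_eq)
  then have "-1 < sqrt ((r + u - 2) / (r + 1/10))"
    by (metis real_sqrt_less_iff real_sqrt_minus real_sqrt_one)
  then show ?thesis
    unfolding qbp_of_def by simp
qed

lemma gB_qbp_of_strict_antimono: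
  assumes "r > - 1/10" and "1 < u1" and "u1 < u2" and "0 < qbp_of r u2"
  shows "gB (qbp_of r u2) u2 < gB (qbp_of r u1) u1"
proof -
  have "qbp_of r u1 \<le> qbp_of r u2"
    using assms(1,3) unfolding qbp_of_def by (simp add: divide_right_mono)
  then have "qbp_of r u1 * (u1 - 1) \<le> qbp_of r u2 * (u1 - 1)"
    using assms(2) by (simp add: mult_right_mono)
  also have "\<dots> < qbp_of r u2 * (u2 - 1)"
    using assms(3,4) by simp
  finally show ?thesis
    using assms(3) unfolding gB_def by (simp add: algebra_simps)
qed

lemma u_b_spec:
  assumes "r > 2/3"
  shows "6/5 < u_b r" and "u_b r < 4/3" and "gB (q_bp r) (u_b r) = 0"
proof -
  let ?P = "\<lambda>u. 6/5 < u \<and> u < 4/3 \<and> gB (qbp_of r u) u = 0"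
  let ?h = "\<lambda>u. gB (qbp_of r u) u"
  have "continuous_on {6/5..4/3} ?h"
    unfolding gB_def qbp_of_def using assms by (intro continuous_intros) auto
  moreover have "?h (4/3) < 0"
    using assms by (simp add: gB_def qbp_of_def)
  moreover have "0 < ?h (6/5)"
  proof -
    have "(r + 6/5 - 2) / (r + 1/10) < 1"
      using assms by (simp add: divide_less_eq)
    then have "qbp_of r (6/5) < 2"
      unfolding qbp_of_def by (simp add: real_sqrt_less_iff[where y = 1, simplified])
    then show ?thesis
      by (simp add: gB_def)
  qed
  ultimately obtain u where "6/5 \<le> u" "u \<le> 4/3" "?h u = 0"
    using IVT2'[of ?h "4/3" 0 "6/5"] by force
  moreover have "u \<noteq> 6/5"
    using \<open>?h u = 0\<close> \<open>0 < ?h (6/5)\<close> by (metis less_irrefl)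
  moreover have "u \<noteq> 4/3"
    using \<open>?h u = 0\<close> \<open>?h (4/3) < 0\<close> by (metis less_irrefl)
  ultimately have "?P u"
    by simp
  moreover have False if "?P v" and "?P w" and "v < w" for v w
  proof -
    have "gB (qbp_of r w) w < gB (qbp_of r v) v"
      using that assms by (intro gB_qbp_of_strict_antimono qbp_of_pos) auto
    with that show False
      by simp
  qed
  then have "v = u" if "?P v" for v
    using that \<open>?P u\<close> by (cases v u rule: linorder_cases) auto
  ultimately have "?P (u_b r)"
    unfolding u_b_def by (rule theI)
  then show "6/5 < u_b r" "u_b r < 4/3" "gB (q_bp r) (u_b r) = 0"
    by (simp_all add: q_bp_def)
qed

lemma q_bp_gt_1:
  assumes "r > 2/3"
  shows "1 < q_bp r"
proof -
  have "q_bp r * (2 * (u_b r - 1)) = 2 - u_b r"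
    using u_b_spec(3)[OF assms] unfolding gB_def by (simp add: algebra_simps)
  then have "q_bp r = (2 - u_b r) / (2 * (u_b r - 1))"
    using u_b_spec(1)[OF assms] by (simp add: eq_divide_eq)
  then show ?thesis
    using u_b_spec(1,2)[OF assms] by (simp add: less_divide_eq)
qed

lemma fB_q_bp:
  assumes "r > 2/3"
  shows "fB (q_bp r) (u_b r) r = 0" and "fB_dq (q_bp r) (u_b r) r < 0"
proof -
  let ?x = "(r + u_b r - 2) / (r + 1/10)"
  have "sqrt ?x = q_bp r - 1"
    by (simp add: q_bp_def qbp_of_def)
  with q_bp_gt_1[OF assms] have "(q_bp r - 1)\<^sup>2 = ?x"
    by (metis diff_gt_0_iff_gt less_eq_real_def real_sqrt_gt_0_iff real_sqrt_pow2)
  then have zero: "r + u_b r - 2 - (r + 1/10) * (q_bp r - 1)\<^sup>2 = 0"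
    using assms by simp
  then show "fB (q_bp r) (u_b r) r = 0"
    by (simp add: fB_def)
  show "fB_dq (q_bp r) (u_b r) r < 0"
    using zero q_bp_gt_1[OF assms] assms by (simp add: fB_dq_def)
qed

theorem theorem1:
  fixes r D \<mu> c :: real
  assumes "r > 2/3" and "D > 0" and "c < u_b r"
  shows "\<exists>\<epsilon>0 > 0. \<forall>\<epsilon>. 0 < \<epsilon> \<and> \<epsilon> < \<epsilon>0 \<longrightarrow>
           hyperbolic_equilibrium (tw_field r D \<mu> c \<epsilon>) (vector [0, 0, 2]) \<and>
           hyperbolic_equilibrium (tw_field r D \<mu> c \<epsilon>) (vector [q_bp r, 0, u_b r])"
proof -
  have "\<forall>\<^sub>F \<epsilon> in at_right 0. hyperbolic_equilibrium (tw_field r D \<mu> c \<epsilon>) (vector [0, 0, 2])"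
    using assms u_b_spec(2)[OF assms(1)]
    by (intro eventually_hyperbolic_tw_equilibrium) (auto simp: fB_def gB_def fB_dq_def)
  moreover have "\<forall>\<^sub>F \<epsilon> in at_right 0.
      hyperbolic_equilibrium (tw_field r D \<mu> c \<epsilon>) (vector [q_bp r, 0, u_b r])"
    using assms u_b_spec[OF assms(1)] q_bp_gt_1[OF assms(1)] fB_q_bp[OF assms(1)]
    by (intro eventually_hyperbolic_tw_equilibrium) auto
  ultimately have "\<forall>\<^sub>F \<epsilon> in at_right 0.
      hyperbolic_equilibrium (tw_field r D \<mu> c \<epsilon>) (vector [0, 0, 2]) \<and>
      hyperbolic_equilibrium (tw_field r D \<mu> c \<epsilon>) (vector [q_bp r, 0, u_b r])"
    by (rule eventually_conj)
  then show ?thesis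
    by (auto simp: eventually_at_right_field)
qed

end
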